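(* Assume $\mathrm{add}(\mathcal M)=\mathfrak c$ (e.g. assume CH). Then there exists an $\mathrm{add}(\mathcal M)$-Luzin set $L\subseteq[\mathbb N]^\infty$ which satisfies $\mathrm{Split}(B_\Lambda,B_\Lambda)$ but does not satisfy $\mathrm{Split}(C_\Omega,C_\Omega)$.
   Context: $[\mathbb N]^\infty$ is the set of infinite subsets of $\mathbb N$, a subspace of $P(\mathbb N)$ identified with the Cantor space $\{0,1\}^{\mathbb N}$. $\mathcal M$ is the ideal of meager sets; $\mathrm{add}(\mathcal M)$ is the least cardinality of a family of meager sets of reals whose union is not meager; $\mathfrak c=2^{\aleph_0}$. For an uncountable cardinal $\kappa$, a $\kappa$-Luzin set is a set $L$ with $|L|\ge\kappa$ such that $|L\cap M|<\kappa$ for every meager set $M$ (of the ambient space). A cover of a space $X$ is a family $\mathcal U$ of subsets of $X$ with $\bigcup\mathcal U=X$ such that $X\not\subseteq U$ for every $U\in\mathcal U$; it is a large cover if every $x\in X$ lies in infinitely many members, and an $\omega$-cover if every finite subset of $X$ is contained in some member. $B_\Lambda$ is the collection of countable large covers of $X$ by Borel sets; $C_\Omega$ is the collection of countable $\omega$-covers of $X$ by clopen sets. $X$ satisfies $\mathrm{Split}(\mathfrak U,\mathfrak V)$ if every $\mathcal U\in\mathfrak U$ can be partitioned into two disjoint subfamilies each containing a subfamily belonging to $\mathfrak V$. *)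

theory Defs
  imports "HOL-Analysis.Analysis"
begin

text \<open>P(N) identified with the Cantor space {0,1}^N via characteristic functions:
  the topology on nat set is the pullback of the product of discrete two-point spaces.\<close>
definition cantor_top :: "nat set topology" where
  "cantor_top = pullback_topology UNIV (\<lambda>A i. i \<in> A)
      (product_topology (\<lambda>_::nat. discrete_topology (UNIV :: bool set)) UNIV)"

definition nowhere_dense :: "nat set set \<Rightarrow> bool" where
  "nowhere_dense S \<longleftrightarrow> cantor_top interior_of (cantor_top closure_of S) = {}"

definition meager :: "nat set set \<Rightarrow> bool" where
  "meager S \<longleftrightarrow> (\<exists>\<N>. countable \<N> \<and> (\<forall>N\<in>\<N>. nowhere_dense N) \<and> S \<subseteq> \<Union>\<N>)"

definition nonmeager_unions :: "nat set set set set" where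
  "nonmeager_unions = {F. (\<forall>M\<in>F. meager M) \<and> \<not> meager (\<Union>F)}"

text \<open>is_addM K: the cardinality of K is add(M), the least cardinality of a
  family of meager sets whose union is not meager.\<close>
definition is_addM :: "'a set \<Rightarrow> bool" where
  "is_addM K \<longleftrightarrow> (\<exists>F\<in>nonmeager_unions. (card_of F, card_of K) \<in> ordIso) \<and> (\<forall>F\<in>nonmeager_unions. (card_of K, card_of F) \<in> ordLeq)"

text \<open>kappa-Luzin set (kappa = |K|) in the ambient space P(N).\<close>
definition luzin :: "'a set \<Rightarrow> nat set set \<Rightarrow> bool" where
  "luzin K L \<longleftrightarrow> (card_of K, card_of L) \<in> ordLeq \<and> (\<forall>M. meager M \<longrightarrow> (card_of (L \<inter> M), card_of K) \<in> ordLess)"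

definition infinite_subsets :: "nat set set" where
  "infinite_subsets = {A. infinite A}"

definition is_cover :: "nat set set \<Rightarrow> nat set set set \<Rightarrow> bool" where
  "is_cover X \<U> \<longleftrightarrow> (\<forall>U\<in>\<U>. U \<subseteq> X) \<and> \<Union>\<U> = X \<and> (\<forall>U\<in>\<U>. \<not> X \<subseteq> U)"

definition large_cover :: "nat set set \<Rightarrow> nat set set set \<Rightarrow> bool" where
  "large_cover X \<U> \<longleftrightarrow> is_cover X \<U> \<and> (\<forall>x\<in>X. infinite {U\<in>\<U>. x \<in> U})"

definition omega_cover :: "nat set set \<Rightarrow> nat set set set \<Rightarrow> bool" where
  "omega_cover X \<U> \<longleftrightarrow> is_cover X \<U> \<and> (\<forall>F. finite F \<and> F \<subseteq> X \<longrightarrow> (\<exists>U\<in>\<U>. F \<subseteq> U))"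

definition borel_in :: "nat set set \<Rightarrow> nat set set set" where
  "borel_in X = sigma_sets X {U. openin (subtopology cantor_top X) U}"

definition clopen_in :: "nat set set \<Rightarrow> nat set set \<Rightarrow> bool" where
  "clopen_in X U \<longleftrightarrow> openin (subtopology cantor_top X) U \<and> closedin (subtopology cantor_top X) U"

definition B_Lambda :: "nat set set \<Rightarrow> nat set set set set" where
  "B_Lambda X = {\<U>. countable \<U> \<and> large_cover X \<U> \<and> \<U> \<subseteq> borel_in X}"

definition C_Omega :: "nat set set \<Rightarrow> nat set set set set" where
  "C_Omega X = {\<U>. countable \<U> \<and> omega_cover X \<U> \<and> (\<forall>U\<in>\<U>. clopen_in X U)}"

definition Split :: "(nat set set \<Rightarrow> nat set set set set) \<Rightarrow> (nat set set \<Rightarrow> nat set set set set)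
    \<Rightarrow> nat set set \<Rightarrow> bool" where
  "Split \<UU> \<VV> X \<longleftrightarrow> (\<forall>\<U>\<in>\<UU> X. \<exists>\<A> \<B>. \<A> \<union> \<B> = \<U> \<and> \<A> \<inter> \<B> = {} \<and>
      (\<exists>\<A>'\<subseteq>\<A>. \<A>' \<in> \<VV> X) \<and> (\<exists>\<B>'\<subseteq>\<B>. \<B>' \<in> \<VV> X))"

end

(* Well-order P(N) by the initial ordinal of the continuum, so that every initial segment
   has fewer than c = add(M) elements, and build L in c stages, each adding finitely many
   points.  Since add(M) = c, everything forbidden by the earlier stages forms a meager set,
   so the new points can be taken generic; as every meager set is covered by the meager set
   attached to some stage, L meets each meager set in fewer than c points.

   Split(B_Lambda, B_Lambda): every sequence of Borel codes (B_n) is handed to some stage.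
   A generic P splits {n. x in B_n} for the fewer than c points x chosen so far.  Points
   chosen later avoid the meager set on which the B_n differ from open sets G_n, and they
   also avoid the meager set of those x for which the generic P fails to split
   {n. x in G_n}.

   Not Split(C_Omega, C_Omega): all finite intersections of points of L are infinite, so the
   sets {x in L. n in x} form a clopen omega-cover.  A partition of it is given by a set
   alpha of indices, and the points added at stage alpha have an intersection that misses
   alpha or its complement, so one half contains no omega-cover.  Two generic points with
   this property are read off the even and odd bits of a single generic set. *)

theory Submission
  imports Defs
begin

unbundle cardinal_syntax

section \<open>The Cantor space and the Baire category theorem\<close>

definition cylinder :: "nat set \<Rightarrow> nat \<Rightarrow> nat set set" where
  "cylinder y m = {z. \<forall>i<m. i \<in> z \<longleftrightarrow> i \<in> y}"

lemma topspace_cantor_top [simp]: "topspace cantor_top = UNIV"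
  by (simp add: cantor_top_def topspace_pullback_topology)

lemma cylinder_self [simp]: "y \<in> cylinder y m"
  by (simp add: cylinder_def)

lemma cylinder_antimono: "m \<le> m' \<Longrightarrow> cylinder y m' \<subseteq> cylinder y m"
  by (auto simp: cylinder_def)

lemma cylinder_eq: "z \<in> cylinder y m \<Longrightarrow> cylinder z m = cylinder y m"
  by (auto simp: cylinder_def)

lemma cylinder_subset: "z \<in> cylinder y m \<Longrightarrow> m \<le> m' \<Longrightarrow> cylinder z m' \<subseteq> cylinder y m"
  using cylinder_eq cylinder_antimono by blast

lemma cylinder_Int_lessThan: "cylinder y m = cylinder (y \<inter> {..<m}) m"
  by (auto simp: cylinder_def)

lemma openin_cylinder: "openin cantor_top (cylinder y m)"
proof -
  define S where "S i = (if i < m then {i \<in> y} else UNIV)" for i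
  have "finite {i. S i \<noteq> topspace (discrete_topology UNIV)}"
    by (rule finite_subset[of _ "{..<m}"]) (auto simp: S_def)
  then have "openin (product_topology (\<lambda>_. discrete_topology UNIV) UNIV) (PiE UNIV S)"
    by (subst openin_PiE_gen) auto
  moreover have "cylinder y m = (\<lambda>A i. i \<in> A) -` PiE UNIV S \<inter> UNIV"
  proof (intro set_eqI iffI)
    fix z assume "z \<in> cylinder y m"
    then show "z \<in> (\<lambda>A i. i \<in> A) -` PiE UNIV S \<inter> UNIV"
      by (auto simp: cylinder_def S_def PiE_def extensional_def)
  next
    fix z assume z: "z \<in> (\<lambda>A i. i \<in> A) -` PiE UNIV S \<inter> UNIV"
    have "(i \<in> z) = (i \<in> y)" if "i < m" for i
    proof -
      have "(i \<in> z) \<in> S i" using z by (simp add: PiE_def Pi_def)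
      then show ?thesis using that by (simp add: S_def)
    qed
    then show "z \<in> cylinder y m" by (simp add: cylinder_def)
  qed
  ultimately show ?thesis
    unfolding cantor_top_def openin_pullback_topology by blast
qed

lemma openin_cantor_top_iff: "openin cantor_top G \<longleftrightarrow> (\<forall>y\<in>G. \<exists>m. cylinder y m \<subseteq> G)"
proof
  assume "openin cantor_top G"
  then obtain U
    where U: "openin (product_topology (\<lambda>_::nat. discrete_topology (UNIV :: bool set)) UNIV) U"
    and G: "G = (\<lambda>A i. i \<in> A) -` U \<inter> UNIV"
    unfolding cantor_top_def openin_pullback_topology by blast
  show "\<forall>y\<in>G. \<exists>m. cylinder y m \<subseteq> G"
  proof
    fix y assume "y \<in> G"
    then have "(\<lambda>i. i \<in> y) \<in> U" using G by auto
    from product_topology_open_contains_basis[OF U this] obtain X where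
      X: "(\<lambda>i. i \<in> y) \<in> (\<Pi>\<^sub>E i\<in>UNIV. X i)" "finite {i. X i \<noteq> topspace (discrete_topology UNIV)}"
         "(\<Pi>\<^sub>E i\<in>UNIV. X i) \<subseteq> U" by blast
    obtain m where m: "\<forall>i\<in>{i. X i \<noteq> UNIV}. i < m"
      using X(2) finite_nat_bounded by (metis topspace_discrete_topology lessThan_iff subset_eq)
    have "(i \<in> z) \<in> X i" if z: "z \<in> cylinder y m" for z i
    proof (cases "i < m")
      case True
      then show ?thesis using z X(1) by (auto simp: cylinder_def)
    next
      case False
      then show ?thesis using m by auto
    qed
    then have "cylinder y m \<subseteq> (\<lambda>A i. i \<in> A) -` (\<Pi>\<^sub>E i\<in>UNIV. X i)"
      by blast
    then show "\<exists>m. cylinder y m \<subseteq> G" using X(3) G by blast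
  qed
next
  assume "\<forall>y\<in>G. \<exists>m. cylinder y m \<subseteq> G"
  then show "openin cantor_top G"
    by (subst openin_subopen) (meson cylinder_self openin_cylinder)
qed

lemma nowhere_dense_iff:
  "nowhere_dense S \<longleftrightarrow> (\<forall>y m. \<exists>z m'. z \<in> cylinder y m \<and> cylinder z m' \<inter> S = {})"
proof
  assume nd: "nowhere_dense S"
  show "\<forall>y m. \<exists>z m'. z \<in> cylinder y m \<and> cylinder z m' \<inter> S = {}"
  proof (intro allI)
    fix y m
    have "\<not> cylinder y m \<subseteq> cantor_top closure_of S"
    proof
      assume "cylinder y m \<subseteq> cantor_top closure_of S"
      then have "cylinder y m \<subseteq> cantor_top interior_of (cantor_top closure_of S)"
        using interior_of_maximal openin_cylinder by blast
      then show False using nd cylinder_self unfolding nowhere_dense_def by blast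
    qed
    then obtain z where z: "z \<in> cylinder y m" "z \<notin> cantor_top closure_of S" by blast
    then obtain T where T: "z \<in> T" "openin cantor_top T" "\<forall>w. w \<in> S \<longrightarrow> w \<notin> T"
      by (auto simp: in_closure_of)
    then obtain m' where "cylinder z m' \<subseteq> T" using openin_cantor_top_iff by blast
    then have "cylinder z m' \<inter> S = {}" using T(3) by blast
    with z(1) show "\<exists>z m'. z \<in> cylinder y m \<and> cylinder z m' \<inter> S = {}" by blast
  qed
next
  assume H: "\<forall>y m. \<exists>z m'. z \<in> cylinder y m \<and> cylinder z m' \<inter> S = {}"
  show "nowhere_dense S" unfolding nowhere_dense_def
  proof (rule ccontr)
    assume "cantor_top interior_of (cantor_top closure_of S) \<noteq> {}"
    then obtain x T where T: "openin cantor_top T" "x \<in> T" "T \<subseteq> cantor_top closure_of S"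
      by (auto simp: interior_of_def)
    then obtain m where m: "cylinder x m \<subseteq> T" using openin_cantor_top_iff by blast
    obtain z m' where z: "z \<in> cylinder x m" "cylinder z m' \<inter> S = {}" using H by blast
    have "z \<in> cantor_top closure_of S" using z(1) m T(3) by blast
    then have "\<exists>w\<in>S. w \<in> cylinder z m'"
      using openin_cylinder[of z m'] cylinder_self[of z m'] unfolding in_closure_of by blast
    then show False using z(2) by blast
  qed
qed

lemma nowhere_dense_I:
  "(\<And>y m. \<exists>z m'. z \<in> cylinder y m \<and> cylinder z m' \<inter> S = {}) \<Longrightarrow> nowhere_dense S"
  unfolding nowhere_dense_iff by blast

lemma nowhere_dense_avoid_cylinder:
  assumes "nowhere_dense S"
  obtains z m' where "m < m'" "z \<in> cylinder y m" "cylinder z m' \<inter> S = {}"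
proof -
  obtain z m' where z: "z \<in> cylinder y m" "cylinder z m' \<inter> S = {}"
    using assms unfolding nowhere_dense_iff by blast
  have "cylinder z (max (Suc m) m') \<inter> S = {}"
    using z(2) cylinder_antimono[of m' "max (Suc m) m'" z] by auto
  with z(1) show thesis by (intro that[of "max (Suc m) m'"]) auto
qed

lemma nowhere_dense_empty: "nowhere_dense {}"
  by (rule nowhere_dense_I) (use cylinder_self in blast)

lemma nowhere_dense_singleton: "nowhere_dense {x}"
proof (rule nowhere_dense_I)
  fix y m
  define z where "z = (if m \<in> x then y - {m} else insert m y)"
  have "z \<in> cylinder y m" "x \<notin> cylinder z (Suc m)"
    by (auto simp: z_def cylinder_def)
  then show "\<exists>z m'. z \<in> cylinder y m \<and> cylinder z m' \<inter> {x} = {}" by blast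
qed

lemma meager_subset: "meager T \<Longrightarrow> S \<subseteq> T \<Longrightarrow> meager S"
  unfolding meager_def by (meson order_trans)

lemma meager_empty [simp]: "meager {}"
  unfolding meager_def by blast

lemma nowhere_dense_imp_meager: "nowhere_dense S \<Longrightarrow> meager S"
  unfolding meager_def by (intro exI[of _ "{S}"]) simp

lemma meager_countable_Union:
  assumes "countable F" "\<And>S. S \<in> F \<Longrightarrow> meager S"
  shows "meager (\<Union>F)"
proof -
  have "\<forall>S\<in>F. \<exists>\<N>. countable \<N> \<and> (\<forall>X\<in>\<N>. nowhere_dense X) \<and> S \<subseteq> \<Union>\<N>"
    using assms(2) unfolding meager_def by blast
  then obtain N where N0: "\<forall>S\<in>F. countable (N S) \<and> (\<forall>X\<in>N S. nowhere_dense X) \<and> S \<subseteq> \<Union>(N S)"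
    by (rule bchoice[THEN exE]) blast
  then have N: "\<And>S. S \<in> F \<Longrightarrow> countable (N S)" "\<And>S X. S \<in> F \<Longrightarrow> X \<in> N S \<Longrightarrow> nowhere_dense X"
    "\<And>S. S \<in> F \<Longrightarrow> S \<subseteq> \<Union>(N S)"
    by blast+
  have "countable (\<Union>S\<in>F. N S)" using assms(1) N(1) by (rule countable_UN)
  moreover have "\<forall>X\<in>(\<Union>S\<in>F. N S). nowhere_dense X" using N(2) by blast
  moreover have "\<Union>F \<subseteq> \<Union>(\<Union>S\<in>F. N S)" using N(3) by blast
  ultimately show ?thesis unfolding meager_def by blast
qed

lemma meager_UN:
  "countable I \<Longrightarrow> (\<And>i. i \<in> I \<Longrightarrow> meager (S i)) \<Longrightarrow> meager (\<Union>i\<in>I. S i)"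
  by (rule meager_countable_Union) auto

lemma meager_Un: "meager S \<Longrightarrow> meager T \<Longrightarrow> meager (S \<union> T)"
  using meager_countable_Union[of "{S, T}"] by auto

lemma meager_countable: "countable S \<Longrightarrow> meager S"
  using meager_UN[of S "\<lambda>x. {x}"] nowhere_dense_imp_meager[OF nowhere_dense_singleton] by simp

lemma meager_imp_sequence:
  assumes "meager S"
  shows "\<exists>N :: nat \<Rightarrow> nat set set. (\<forall>k. nowhere_dense (N k)) \<and> S \<subseteq> (\<Union>k. N k)"
proof -
  obtain \<N> where \<N>: "countable \<N>" "\<forall>N\<in>\<N>. nowhere_dense N" "S \<subseteq> \<Union>\<N>"
    using assms unfolding meager_def by blast
  have "nowhere_dense (from_nat_into (insert {} \<N>) k)" for k
    using from_nat_into[of "insert {} \<N>" k] \<N>(2) nowhere_dense_empty by auto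
  moreover have "S \<subseteq> (\<Union>k. from_nat_into (insert {} \<N>) k)"
    using \<N>(1,3) by (simp add: range_from_nat_into)
  ultimately show ?thesis by blast
qed

lemma nested_cylinders_limit:
  assumes m: "strict_mono m" and z: "\<And>k. z (Suc k) \<in> cylinder (z k) (m k)"
  shows "\<exists>x. \<forall>k. x \<in> cylinder (z k) (m k)"
proof -
  have nested: "z j \<in> cylinder (z k) (m k)" if "k \<le> j" for k j
    using that
  proof (induction j)
    case (Suc j)
    show ?case
    proof (cases "k = Suc j")
      case False
      then have "cylinder (z j) (m j) \<subseteq> cylinder (z k) (m k)"
        using Suc m by (intro cylinder_subset) (auto simp: strict_mono_less_eq)
      then show ?thesis using z[of j] by blast
    qed simp
  qed simp
  define x where "x = {i. i \<in> z (Suc i)}"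
  have "x \<in> cylinder (z k) (m k)" for k
    unfolding cylinder_def
  proof (intro CollectI allI impI)
    fix i assume i: "i < m k"
    define j where "j = max k (Suc i)"
    have "i < m (Suc i)"
      using strict_mono_imp_increasing[OF m, of "Suc i"] by simp
    then have "(i \<in> z j) = (i \<in> z (Suc i))"
      using nested[of "Suc i" j] by (simp add: j_def cylinder_def)
    moreover have "(i \<in> z j) = (i \<in> z k)"
      using nested[of k j] i by (simp add: j_def cylinder_def)
    ultimately show "(i \<in> x) = (i \<in> z k)" by (simp add: x_def)
  qed
  then show ?thesis by blast
qed

theorem baire_cylinder:
  assumes "meager S"
  shows "\<exists>x\<in>cylinder y m. x \<notin> S"
proof -
  obtain N :: "nat \<Rightarrow> nat set set" where N: "\<forall>k. nowhere_dense (N k)" "S \<subseteq> (\<Union>k. N k)"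
    using meager_imp_sequence[OF assms] by blast
  define Q where "Q k q q' \<longleftrightarrow> snd q < snd q' \<and> fst q' \<in> cylinder (fst q) (snd q)
    \<and> cylinder (fst q') (snd q') \<inter> N k = {}" for k q q'
  have step: "\<exists>q'. Q k q q'" for k q
  proof -
    obtain z m' where "snd q < m'" "z \<in> cylinder (fst q) (snd q)" "cylinder z m' \<inter> N k = {}"
      by (rule nowhere_dense_avoid_cylinder[OF N(1)[rule_format],
          where m = "snd q" and y = "fst q"])
    then show ?thesis unfolding Q_def by (intro exI[of _ "(z, m')"]) simp
  qed
  have "\<exists>f. \<forall>k. (k = 0 \<longrightarrow> f k = (y, m)) \<and> Q k (f k) (f (Suc k))"
    by (rule dependent_nat_choice) (use step in auto)
  then obtain f where f0: "f 0 = (y, m)" and f: "\<And>k. Q k (f k) (f (Suc k))"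
    by blast
  have "strict_mono (snd \<circ> f)"
    using f by (intro strict_monoI_Suc) (simp add: Q_def)
  moreover have "(fst \<circ> f) (Suc k) \<in> cylinder ((fst \<circ> f) k) ((snd \<circ> f) k)" for k
    using f[of k] by (simp add: Q_def)
  ultimately obtain x where x: "\<And>k. x \<in> cylinder (fst (f k)) (snd (f k))"
    using nested_cylinders_limit[of "snd \<circ> f" "fst \<circ> f"] by auto
  have "x \<notin> N k" for k
    using x[of "Suc k"] f[of k] by (auto simp: Q_def)
  with N(2) x[of 0] f0 show ?thesis by auto
qed

lemma not_meager_cylinder: "\<not> meager (cylinder y m)"
  using baire_cylinder by blast

lemma not_meager_UNIV: "\<not> meager (UNIV :: nat set set)"
  using baire_cylinder by blast

lemma meager_openin_empty: "openin cantor_top G \<Longrightarrow> meager G \<Longrightarrow> G = {}"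
  using openin_cantor_top_iff not_meager_cylinder meager_subset by blast

section \<open>Generic sets\<close>

lemma nowhere_dense_eventually_constant:
  assumes "infinite A"
  shows "nowhere_dense {x. \<forall>a\<in>A. k \<le> a \<longrightarrow> (a \<in> x) = b}"
proof (rule nowhere_dense_I)
  fix y m
  obtain a where a: "a \<in> A" "max k m \<le> a"
    using assms infinite_nat_iff_unbounded_le by blast
  define z where "z = (if b then y - {a} else insert a y)"
  have "z \<in> cylinder y m" using a by (auto simp: z_def cylinder_def)
  moreover have "cylinder z (Suc a) \<inter> {x. \<forall>a\<in>A. k \<le> a \<longrightarrow> (a \<in> x) = b} = {}"
    using a by (auto simp: cylinder_def z_def split: if_splits)
  ultimately show "\<exists>z m'. z \<in> cylinder y m \<and> cylinder z m' \<inter> {x. \<forall>a\<in>A. k \<le> a \<longrightarrow> (a \<in> x) = b} = {}"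
    by blast
qed

lemma meager_almost_constant:
  assumes "infinite A"
  shows "meager {x. finite {a\<in>A. (a \<in> x) \<noteq> b}}"
proof -
  have "{x. finite {a\<in>A. (a \<in> x) \<noteq> b}} \<subseteq> (\<Union>k. {x. \<forall>a\<in>A. k \<le> a \<longrightarrow> (a \<in> x) = b})"
  proof
    fix x assume "x \<in> {x. finite {a\<in>A. (a \<in> x) \<noteq> b}}"
    then obtain k where "\<forall>a\<in>{a\<in>A. (a \<in> x) \<noteq> b}. a < k"
      using finite_nat_bounded[of "{a\<in>A. (a \<in> x) \<noteq> b}"] by auto
    then have "x \<in> {x. \<forall>a\<in>A. k \<le> a \<longrightarrow> (a \<in> x) = b}" by force
    then show "x \<in> (\<Union>k. {x. \<forall>a\<in>A. k \<le> a \<longrightarrow> (a \<in> x) = b})" by blast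
  qed
  moreover have "meager (\<Union>k. {x. \<forall>a\<in>A. k \<le> a \<longrightarrow> (a \<in> x) = b})"
    using nowhere_dense_eventually_constant[OF assms]
    by (intro meager_UN nowhere_dense_imp_meager) auto
  ultimately show ?thesis using meager_subset by blast
qed

lemma meager_finite_Int: "infinite A \<Longrightarrow> meager {x. finite (x \<inter> A)}"
  using meager_almost_constant[of A False] by (simp add: Int_def conj_commute)

definition splits :: "nat set \<Rightarrow> nat set \<Rightarrow> bool" where
  "splits P A \<longleftrightarrow> infinite (A \<inter> P) \<and> infinite (A - P)"

lemma meager_not_splits: "infinite A \<Longrightarrow> meager {P. \<not> splits P A}"
proof -
  assume A: "infinite A"
  have "{P. \<not> splits P A} = {P. finite {a\<in>A. (a \<in> P) \<noteq> True}} \<union> {P. finite {a\<in>A. (a \<in> P) \<noteq> False}}"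
    by (auto simp: splits_def Int_def set_diff_eq)
  then show ?thesis
    using meager_Un[OF meager_almost_constant[OF A, of True] meager_almost_constant[OF A, of False]]
    by simp
qed

lemma nowhere_dense_vimage:
  assumes cont: "\<And>z m. \<exists>m'. \<phi> ` cylinder z m' \<subseteq> cylinder (\<phi> z) m"
    and open_map: "\<And>y m. \<exists>m'. cylinder (\<phi> y) m' \<subseteq> \<phi> ` cylinder y m"
    and N: "nowhere_dense N"
  shows "nowhere_dense (\<phi> -` N)"
proof (rule nowhere_dense_I)
  fix y m
  obtain m2 where m2: "cylinder (\<phi> y) m2 \<subseteq> \<phi> ` cylinder y m" using open_map by blast
  obtain w m3 where w: "w \<in> cylinder (\<phi> y) m2" "cylinder w m3 \<inter> N = {}"
    using N unfolding nowhere_dense_iff by blast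
  obtain z where z: "z \<in> cylinder y m" "\<phi> z = w" using m2 w(1) by blast
  obtain m1 where m1: "\<phi> ` cylinder z m1 \<subseteq> cylinder w m3" using cont z(2) by blast
  have "cylinder z m1 \<inter> \<phi> -` N = {}" using m1 w(2) by blast
  with z(1) show "\<exists>z m'. z \<in> cylinder y m \<and> cylinder z m' \<inter> \<phi> -` N = {}" by blast
qed

lemma meager_vimage:
  assumes cont: "\<And>z m. \<exists>m'. \<phi> ` cylinder z m' \<subseteq> cylinder (\<phi> z) m"
    and open_map: "\<And>y m. \<exists>m'. cylinder (\<phi> y) m' \<subseteq> \<phi> ` cylinder y m"
    and M: "meager M"
  shows "meager (\<phi> -` M)"
proof -
  obtain \<N> where N: "countable \<N>" "\<forall>N\<in>\<N>. nowhere_dense N" "M \<subseteq> \<Union>\<N>"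
    using M unfolding meager_def by blast
  have "\<phi> -` M \<subseteq> (\<Union>N\<in>\<N>. \<phi> -` N)" using N(3) by blast
  moreover have "meager (\<Union>N\<in>\<N>. \<phi> -` N)"
    using N(1,2) nowhere_dense_vimage[OF cont open_map] nowhere_dense_imp_meager
    by (intro meager_UN) auto
  ultimately show ?thesis by (rule meager_subset[rotated])
qed

definition pair_bits :: "(nat \<Rightarrow> bool \<Rightarrow> bool \<Rightarrow> bool) \<Rightarrow> nat set \<Rightarrow> nat set" where
  "pair_bits c z = {n. c n (2 * n \<in> z) (Suc (2 * n) \<in> z)}"

lemma pair_bits_cylinder: "pair_bits c ` cylinder z (2 * m) \<subseteq> cylinder (pair_bits c z) m"
  by (auto simp: pair_bits_def cylinder_def)

lemma cylinder_subset_pair_bits: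
  assumes onto: "\<And>n v. \<exists>a b. c n a b = v"
  shows "cylinder (pair_bits c y) m \<subseteq> pair_bits c ` cylinder y m"
proof
  fix x assume x: "x \<in> cylinder (pair_bits c y) m"
  have "\<forall>n. \<exists>a b. c n a b = (n \<in> x)" using onto by blast
  then obtain a where "\<forall>n. \<exists>b. c n (a n) b = (n \<in> x)" by (auto dest: choice)
  then obtain b where ab: "\<forall>n. c n (a n) (b n) = (n \<in> x)" by (auto dest: choice)
  define z where "z = {i \<in> y. i < 2 * m} \<union> {2 * n | n. m \<le> n \<and> a n}
    \<union> {Suc (2 * n) | n. m \<le> n \<and> b n}"
  have low: "i \<in> z \<longleftrightarrow> i \<in> y" if "i < 2 * m" for i
    using that by (auto simp: z_def)
  have high: "2 * n \<in> z \<longleftrightarrow> a n" "Suc (2 * n) \<in> z \<longleftrightarrow> b n" if "m \<le> n" for n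
    using that by (auto simp: z_def) presburger+
  have "z \<in> cylinder y m" using low by (simp add: cylinder_def)
  moreover have "n \<in> pair_bits c z \<longleftrightarrow> n \<in> x" for n
  proof (cases "n < m")
    case True
    then have "n \<in> pair_bits c z \<longleftrightarrow> n \<in> pair_bits c y" by (simp add: pair_bits_def low)
    also have "\<dots> \<longleftrightarrow> n \<in> x" using x True by (simp add: cylinder_def)
    finally show ?thesis .
  next
    case False
    then show ?thesis using ab by (simp add: pair_bits_def high)
  qed
  ultimately show "x \<in> pair_bits c ` cylinder y m" by blast
qed

lemma meager_vimage_pair_bits:
  assumes "\<And>n v. \<exists>a b. c n a b = v" "meager M"
  shows "meager (pair_bits c -` M)"
proof (rule meager_vimage[OF _ _ assms(2)])
  show "\<exists>m'. pair_bits c ` cylinder z m' \<subseteq> cylinder (pair_bits c z) m" for z m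
    using pair_bits_cylinder by blast
  show "\<exists>m'. cylinder (pair_bits c y) m' \<subseteq> pair_bits c ` cylinder y m" for y m
    using cylinder_subset_pair_bits[of c, OF assms(1)] by blast
qed

section \<open>Borel codes and the property of Baire\<close>

definition basic_cylinder :: "nat \<Rightarrow> nat set set" where
  "basic_cylinder k = (case from_nat k :: nat list \<times> nat of (xs, m) \<Rightarrow> cylinder (set xs) m)"

lemma ex_basic_cylinder_eq: "\<exists>k. basic_cylinder k = cylinder y m"
proof -
  obtain xs where xs: "set xs = y \<inter> {..<m}" using finite_list[of "y \<inter> {..<m}"] by auto
  have "basic_cylinder (to_nat (xs, m)) = cylinder y m"
    by (simp add: basic_cylinder_def xs flip: cylinder_Int_lessThan)
  then show ?thesis by blast
qed

definition open_of_code :: "nat set \<Rightarrow> nat set set" where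
  "open_of_code K = (\<Union>k\<in>K. basic_cylinder k)"

lemma openin_open_of_code: "openin cantor_top (open_of_code K)"
  unfolding open_of_code_def basic_cylinder_def
  by (intro openin_Union) (auto simp: openin_cylinder split: prod.splits)

lemma openin_imp_open_of_code:
  assumes "openin cantor_top G"
  shows "\<exists>K. G = open_of_code K"
proof -
  have "G = open_of_code {k. basic_cylinder k \<subseteq> G}"
  proof
    show "G \<subseteq> open_of_code {k. basic_cylinder k \<subseteq> G}"
    proof
      fix y assume "y \<in> G"
      then obtain m where m: "cylinder y m \<subseteq> G" using assms openin_cantor_top_iff by blast
      obtain k where "basic_cylinder k = cylinder y m" using ex_basic_cylinder_eq by blast
      with m show "y \<in> open_of_code {k. basic_cylinder k \<subseteq> G}"
        unfolding open_of_code_def using cylinder_self[of y m] by blast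
    qed
  qed (auto simp: open_of_code_def)
  then show ?thesis by blast
qed

definition baire_property :: "nat set set \<Rightarrow> bool" where
  "baire_property B \<longleftrightarrow> (\<exists>G M. openin cantor_top G \<and> meager M \<and> B - M = G - M)"

lemma baire_property_openin: "openin cantor_top G \<Longrightarrow> baire_property G"
  unfolding baire_property_def using meager_empty by blast

lemma nowhere_dense_closure_of: "nowhere_dense S \<Longrightarrow> nowhere_dense (cantor_top closure_of S)"
  by (simp add: nowhere_dense_def)

lemma nowhere_dense_frontier_openin:
  assumes G: "openin cantor_top G"
  shows "nowhere_dense (- G - cantor_top interior_of (- G))"
proof (rule nowhere_dense_I)
  fix y m
  show "\<exists>z m'. z \<in> cylinder y m \<and> cylinder z m' \<inter> (- G - cantor_top interior_of (- G)) = {}"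
  proof (cases "cylinder y m \<subseteq> - G")
    case True
    then have "cylinder y m \<subseteq> cantor_top interior_of (- G)"
      using interior_of_maximal openin_cylinder by blast
    then show ?thesis using cylinder_self by blast
  next
    case False
    then obtain z where z: "z \<in> cylinder y m" "z \<in> G" by blast
    then obtain m' where "cylinder z m' \<subseteq> G" using G openin_cantor_top_iff by blast
    with z(1) show ?thesis by blast
  qed
qed

lemma baire_property_Compl:
  assumes "baire_property B"
  shows "baire_property (- B)"
proof -
  obtain G M where GM: "openin cantor_top G" "meager M" "B - M = G - M"
    using assms unfolding baire_property_def by blast
  define G' where "G' = cantor_top interior_of (- G)"
  define M' where "M' = M \<union> (- G - G')"
  have "meager M'"
    unfolding M'_def G'_def
    by (intro meager_Un GM(2) nowhere_dense_imp_meager nowhere_dense_frontier_openin GM(1))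
  moreover have "- B - M' = G' - M'"
    using GM(3) interior_of_subset[of cantor_top "- G"] by (auto simp: M'_def G'_def)
  moreover have "openin cantor_top G'"
    by (simp add: G'_def)
  ultimately show ?thesis unfolding baire_property_def by blast
qed

lemma baire_property_UN:
  assumes "\<And>i::nat. baire_property (B i)"
  shows "baire_property (\<Union>i. B i)"
proof -
  obtain G M where GM: "\<And>i. openin cantor_top (G i)" "\<And>i. meager (M i)" "\<And>i. B i - M i = G i - M i"
    using assms unfolding baire_property_def by metis
  have "(\<Union>i. B i) - (\<Union>i. M i) = (\<Union>i. G i) - (\<Union>i. M i)"
    using GM(3) by blast
  moreover have "meager (\<Union>i. M i)" using GM(2) by (intro meager_UN) auto
  moreover have "openin cantor_top (\<Union>i. G i)" using GM(1) by (intro openin_Union) auto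
  ultimately show ?thesis unfolding baire_property_def by blast
qed

datatype borel_code = Open_code "nat set" | Compl_code borel_code | Union_code "nat \<Rightarrow> borel_code"

primrec borel_set :: "borel_code \<Rightarrow> nat set set" where
  "borel_set (Open_code K) = open_of_code K"
| "borel_set (Compl_code c) = - borel_set c"
| "borel_set (Union_code f) = (\<Union>i. borel_set (f i))"

lemma baire_property_borel_set: "baire_property (borel_set c)"
  by (induction c)
    (auto intro: baire_property_openin openin_open_of_code baire_property_Compl baire_property_UN)

lemma borel_in_eq_borel_set_Int:
  assumes "U \<in> borel_in L"
  shows "\<exists>c. U = borel_set c \<inter> L"
  using assms unfolding borel_in_def
proof (induction rule: sigma_sets.induct)
  case (Basic a)
  then obtain T where T: "openin cantor_top T" "a = T \<inter> L" by (auto simp: openin_subtopology)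
  then obtain K where "T = open_of_code K" using openin_imp_open_of_code by blast
  with T show ?case by (intro exI[of _ "Open_code K"]) simp
next
  case Empty
  show ?case by (intro exI[of _ "Open_code {}"]) (simp add: open_of_code_def)
next
  case (Compl a)
  then obtain c where "a = borel_set c \<inter> L" by blast
  then show ?case by (intro exI[of _ "Compl_code c"]) auto
next
  case (Union a)
  then obtain f where "\<And>i. a i = borel_set (f i) \<inter> L" by metis
  then show ?case by (intro exI[of _ "Union_code f"]) auto
qed

lemma meager_subset_meager_borel_set:
  assumes "meager M"
  shows "\<exists>c. meager (borel_set c) \<and> M \<subseteq> borel_set c"
proof -
  obtain N :: "nat \<Rightarrow> nat set set" where N: "\<forall>k. nowhere_dense (N k)" "M \<subseteq> (\<Union>k. N k)"
    using meager_imp_sequence[OF assms] by blast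
  have "openin cantor_top (- (cantor_top closure_of N k))" for k
    using closedin_closure_of[of cantor_top "N k"] by (simp add: closedin_def Compl_eq_Diff_UNIV)
  then have "\<forall>k. \<exists>K. open_of_code K = - (cantor_top closure_of N k)"
    by (metis openin_imp_open_of_code)
  then obtain K where K: "\<forall>k. open_of_code (K k) = - (cantor_top closure_of N k)"
    by (auto dest: choice)
  define c where "c = Union_code (\<lambda>k. Compl_code (Open_code (K k)))"
  have "borel_set c = (\<Union>k. cantor_top closure_of N k)"
    by (simp add: c_def K)
  moreover have "meager (\<Union>k. cantor_top closure_of N k)"
    using N(1) by (intro meager_UN nowhere_dense_imp_meager nowhere_dense_closure_of) auto
  moreover have "M \<subseteq> (\<Union>k. cantor_top closure_of N k)"
  proof -
    have "N k \<subseteq> cantor_top closure_of N k" for k by (simp add: closure_of_subset)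
    with N(2) show ?thesis by blast
  qed
  ultimately show ?thesis by (intro exI[of _ c]) simp
qed

definition baire_decomp :: "borel_code \<Rightarrow> nat set set \<times> nat set set" where
  "baire_decomp c = (SOME (G, M). openin cantor_top G \<and> meager M \<and> borel_set c - M = G - M)"

lemma baire_decomp:
  "openin cantor_top (fst (baire_decomp c))" "meager (snd (baire_decomp c))"
  "borel_set c - snd (baire_decomp c) = fst (baire_decomp c) - snd (baire_decomp c)"
proof -
  have "\<exists>p. (case p of (G, M) \<Rightarrow> openin cantor_top G \<and> meager M \<and> borel_set c - M = G - M)"
    using baire_property_borel_set[of c] unfolding baire_property_def by auto
  then have "case baire_decomp c of
      (G, M) \<Rightarrow> openin cantor_top G \<and> meager M \<and> borel_set c - M = G - M"
    unfolding baire_decomp_def by (rule someI_ex)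
  then show "openin cantor_top (fst (baire_decomp c))" "meager (snd (baire_decomp c))"
    "borel_set c - snd (baire_decomp c) = fst (baire_decomp c) - snd (baire_decomp c)"
    by (simp_all split: prod.splits)
qed

text \<open>The open part of the decomposition is then meager, hence empty.\<close>
lemma meager_borel_set_subset_baire_decomp:
  assumes "meager (borel_set c)"
  shows "borel_set c \<subseteq> snd (baire_decomp c)"
proof -
  let ?G = "fst (baire_decomp c)" and ?M = "snd (baire_decomp c)"
  have "?G \<subseteq> (borel_set c - ?M) \<union> ?M" using baire_decomp(3) by blast
  then have "meager ?G"
    using assms baire_decomp(2) by (meson Diff_subset meager_Un meager_subset)
  then have "?G = {}" using baire_decomp(1) meager_openin_empty by blast
  then show ?thesis using baire_decomp(3) by blast
qed

section \<open>Generic splitters of sequences of open sets\<close>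

definition infinitely_often :: "(nat \<Rightarrow> nat set set) \<Rightarrow> nat set set" where
  "infinitely_often G = {x. infinite {n. x \<in> G n}}"

definition good_splitter :: "(nat \<Rightarrow> nat set set) \<Rightarrow> nat set \<Rightarrow> bool" where
  "good_splitter G P \<longleftrightarrow>
     (\<forall>y m. cylinder y m \<inter> infinitely_often G \<noteq> {} \<longrightarrow> splits P {n. G n \<inter> cylinder y m \<noteq> {}})"

lemma meager_not_good_splitter: "meager {P. \<not> good_splitter G P}"
proof -
  define B where "B k = {P. basic_cylinder k \<inter> infinitely_often G \<noteq> {} \<and>
    \<not> splits P {n. G n \<inter> basic_cylinder k \<noteq> {}}}" for k
  have cover: "{P. \<not> good_splitter G P} \<subseteq> (\<Union>k. B k)"
  proof
    fix P assume "P \<in> {P. \<not> good_splitter G P}"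
    then obtain y m where "cylinder y m \<inter> infinitely_often G \<noteq> {}"
      "\<not> splits P {n. G n \<inter> cylinder y m \<noteq> {}}"
      unfolding good_splitter_def by blast
    moreover obtain k where "basic_cylinder k = cylinder y m" using ex_basic_cylinder_eq by blast
    ultimately have "P \<in> B k" by (simp add: B_def)
    then show "P \<in> (\<Union>k. B k)" by blast
  qed
  have "meager (B k)" for k
  proof (cases "basic_cylinder k \<inter> infinitely_often G = {}")
    case False
    then obtain x where x: "x \<in> basic_cylinder k" "infinite {n. x \<in> G n}"
      by (auto simp: infinitely_often_def)
    have "{n. x \<in> G n} \<subseteq> {n. G n \<inter> basic_cylinder k \<noteq> {}}" using x(1) by blast
    then have "infinite {n. G n \<inter> basic_cylinder k \<noteq> {}}" using x(2) finite_subset by blast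
    then show ?thesis
      by (rule meager_subset[OF meager_not_splits]) (auto simp: B_def)
  qed (simp add: B_def)
  then have "meager (\<Union>k. B k)" by (intro meager_UN) auto
  then show ?thesis using cover by (rule meager_subset)
qed

lemma meager_finitely_often_in:
  assumes G: "\<And>n. openin cantor_top (G n)"
    and Q: "\<And>y m. cylinder y m \<inter> infinitely_often G \<noteq> {} \<Longrightarrow>
      infinite ({n. G n \<inter> cylinder y m \<noteq> {}} \<inter> Q)"
  shows "meager {x \<in> infinitely_often G. finite ({n. x \<in> G n} \<inter> Q)}"
proof -
  define C where "C k = {x \<in> infinitely_often G. \<forall>n\<in>Q. k \<le> n \<longrightarrow> x \<notin> G n}" for k
  have "nowhere_dense (C k)" for k
  proof (rule nowhere_dense_I)
    fix y m
    show "\<exists>z m'. z \<in> cylinder y m \<and> cylinder z m' \<inter> C k = {}"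
    proof (cases "cylinder y m \<inter> infinitely_often G = {}")
      case True
      then have "cylinder y m \<inter> C k = {}" by (auto simp: C_def)
      then show ?thesis using cylinder_self by blast
    next
      case False
      obtain n where n: "k \<le> n" "n \<in> Q" "G n \<inter> cylinder y m \<noteq> {}"
        using Q[OF False] unfolding infinite_nat_iff_unbounded_le by blast
      then obtain w where w: "w \<in> G n" "w \<in> cylinder y m" by blast
      then obtain m' where "cylinder w m' \<subseteq> G n" using G openin_cantor_top_iff by blast
      then have "cylinder w m' \<inter> C k = {}" using n by (auto simp: C_def)
      with w(2) show ?thesis by blast
    qed
  qed
  then have "meager (\<Union>k. C k)" by (intro meager_UN nowhere_dense_imp_meager) auto
  moreover have "{x \<in> infinitely_often G. finite ({n. x \<in> G n} \<inter> Q)} \<subseteq> (\<Union>k. C k)"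
  proof
    fix x assume x: "x \<in> {x \<in> infinitely_often G. finite ({n. x \<in> G n} \<inter> Q)}"
    then obtain k where "\<forall>n\<in>{n. x \<in> G n} \<inter> Q. n < k"
      using finite_nat_bounded[of "{n. x \<in> G n} \<inter> Q"] by auto
    then have "n < k" if "x \<in> G n" "n \<in> Q" for n using that by blast
    then have "x \<in> C k" using x by (auto simp: C_def not_le[symmetric])
    then show "x \<in> (\<Union>k. C k)" by blast
  qed
  ultimately show ?thesis by (rule meager_subset)
qed

lemma meager_not_splits_good_splitter:
  assumes G: "\<And>n. openin cantor_top (G n)" and P: "good_splitter G P"
  shows "meager {x \<in> infinitely_often G. \<not> splits P {n. x \<in> G n}}"
proof -
  have "infinite ({n. G n \<inter> cylinder y m \<noteq> {}} \<inter> P) \<and> infinite ({n. G n \<inter> cylinder y m \<noteq> {}} \<inter> - P)"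
    if "cylinder y m \<inter> infinitely_often G \<noteq> {}" for y m
    using P that unfolding good_splitter_def splits_def by (simp add: Diff_eq)
  then have "meager {x \<in> infinitely_often G. finite ({n. x \<in> G n} \<inter> Q)}" if "Q = P \<or> Q = - P" for Q
    using that by (intro meager_finitely_often_in[OF G]) auto
  then have "meager ({x \<in> infinitely_often G. finite ({n. x \<in> G n} \<inter> P)} \<union>
                     {x \<in> infinitely_often G. finite ({n. x \<in> G n} \<inter> - P)})"
    by (intro meager_Un) auto
  then show ?thesis
    by (rule meager_subset) (auto simp: splits_def Diff_eq)
qed

section \<open>Cardinality bounds\<close>

primrec code_tree :: "borel_code \<Rightarrow> (nat list \<times> nat) set" where
  "code_tree (Open_code K) = insert ([], 0) ((\<lambda>k. ([], k + 3)) ` K)"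
| "code_tree (Compl_code c) = insert ([], 1) (apfst (Cons 0) ` code_tree c)"
| "code_tree (Union_code f) = insert ([], 2) (\<Union>i. apfst (Cons i) ` code_tree (f i))"

definition subtree :: "nat \<Rightarrow> (nat list \<times> nat) set \<Rightarrow> (nat list \<times> nat) set" where
  "subtree i E = {(p, v). (i # p, v) \<in> E}"

lemma subtree_code_tree:
  "subtree i (code_tree (Open_code K)) = {}"
  "subtree i (code_tree (Compl_code c)) = (if i = 0 then code_tree c else {})"
  "subtree i (code_tree (Union_code f)) = code_tree (f i)"
  by (auto simp: subtree_def image_iff) (metis apfst_conv)+

lemma root_code_tree:
  "([], v) \<in> code_tree (Open_code K) \<longleftrightarrow> v = 0 \<or> (\<exists>k\<in>K. v = k + 3)"
  "([], v) \<in> code_tree (Compl_code c) \<longleftrightarrow> v = 1"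
  "([], v) \<in> code_tree (Union_code f) \<longleftrightarrow> v = 2"
  by (auto simp: image_iff)

lemma inj_code_tree: "inj code_tree"
proof (rule injI)
  fix c d show "code_tree c = code_tree d \<Longrightarrow> c = d"
  proof (induction c arbitrary: d)
    case (Open_code K)
    have root: "([], v) \<in> code_tree d \<longleftrightarrow> v = 0 \<or> (\<exists>k\<in>K. v = k + 3)" for v
      unfolding Open_code[symmetric] by (rule root_code_tree(1))
    show ?case
    proof (cases d)
      case (Open_code K')
      have "k \<in> K \<longleftrightarrow> k \<in> K'" for k
        using root[of "k + 3"] by (auto simp: Open_code)
      then show ?thesis using Open_code by blast
    qed (use root[of 0] in \<open>simp_all add: root_code_tree del: code_tree.simps\<close>)
  next
    case (Compl_code c)
    have root: "([], v) \<in> code_tree d \<longleftrightarrow> v = 1" for v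
      unfolding Compl_code.prems[symmetric] by (rule root_code_tree(2))
    show ?case
    proof (cases d)
      case (Compl_code c')
      then show ?thesis
        using Compl_code.IH arg_cong[OF Compl_code.prems, of "subtree 0"]
        unfolding Compl_code subtree_code_tree by simp
    qed (use root[of 1] in \<open>simp_all add: root_code_tree del: code_tree.simps\<close>)
  next
    case (Union_code f)
    have root: "([], v) \<in> code_tree d \<longleftrightarrow> v = 2" for v
      unfolding Union_code.prems[symmetric] by (rule root_code_tree(3))
    show ?case
    proof (cases d)
      case (Union_code f')
      then have "f i = f' i" for i
        using Union_code.IH arg_cong[OF Union_code.prems, of "subtree i"]
        unfolding Union_code subtree_code_tree by simp
      then show ?thesis using Union_code by auto
    qed (use root[of 2] in \<open>simp_all add: root_code_tree del: code_tree.simps\<close>)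
  qed
qed

definition code_seq_tree :: "(nat \<Rightarrow> borel_code) \<Rightarrow> nat set" where
  "code_seq_tree cs = {to_nat (n, t) | n t. t \<in> code_tree (cs n)}"

lemma inj_code_seq_tree: "inj code_seq_tree"
proof (rule injI)
  fix cs ds assume eq: "code_seq_tree cs = code_seq_tree ds"
  have mem: "t \<in> code_tree (es n) \<longleftrightarrow> to_nat (n, t) \<in> code_seq_tree es" for es n t
    by (cases t) (auto simp: code_seq_tree_def)
  have "t \<in> code_tree (cs n) \<longleftrightarrow> t \<in> code_tree (ds n)" for n t
    unfolding mem eq ..
  then have "code_tree (cs n) = code_tree (ds n)" for n by blast
  then show "cs = ds" using injD[OF inj_code_tree] by blast
qed

definition small :: "'a set \<Rightarrow> bool" where
  "small X \<longleftrightarrow> |X| <o |UNIV :: nat set set|"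

lemma infinite_UNIV_nat_set: "infinite (UNIV :: nat set set)"
  using infinite_UNIV_nat inj_on_finite[of "\<lambda>n::nat. {n}" UNIV UNIV] by (auto simp: inj_on_def)

lemma card_of_ordLess_infinite: "finite A \<Longrightarrow> infinite B \<Longrightarrow> |A| <o |B|"
  using finite_ordLess_infinite[of "|A|" "|B|"]
  by (simp add: Field_card_of card_of_Well_order card_of_well_order_on)

lemma small_finite: "finite X \<Longrightarrow> small X"
  unfolding small_def using card_of_ordLess_infinite infinite_UNIV_nat_set by blast

lemma small_subset: "small B \<Longrightarrow> A \<subseteq> B \<Longrightarrow> small A"
  unfolding small_def by (rule ordLeq_ordLess_trans[OF card_of_mono1])

lemma small_image: "small A \<Longrightarrow> small (f ` A)"
  unfolding small_def by (rule ordLeq_ordLess_trans[OF card_of_image])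

lemma small_Un: "small A \<Longrightarrow> small B \<Longrightarrow> small (A \<union> B)"
  unfolding small_def by (rule card_of_Un_ordLess_infinite[OF infinite_UNIV_nat_set])

lemma small_UN_finite:
  assumes I: "small I" and A: "\<And>i. i \<in> I \<Longrightarrow> finite (A i)"
  shows "small (\<Union>i\<in>I. A i)"
proof (cases "finite I")
  case True
  then show ?thesis using A by (intro small_finite) blast
next
  case False
  have "\<forall>i\<in>I. |A i| \<le>o |I|"
    using A False by (blast intro: ordLess_imp_ordLeq card_of_ordLess_infinite)
  then have "|\<Union>i\<in>I. A i| \<le>o |I|"
    by (rule card_of_UNION_ordLeq_infinite[OF False ordIso_imp_ordLeq[OF card_of_refl]])
  then show ?thesis using I unfolding small_def by (rule ordLeq_ordLess_trans)
qed

lemma card_of_lists_length_le: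
  assumes S: "infinite S"
  shows "|{xs. length xs = n \<and> set xs \<subseteq> S}| \<le>o |S|"
proof (induction n)
  case 0
  have "{xs. length xs = 0 \<and> set xs \<subseteq> S} = {[]}" by auto
  then show ?case using S by (simp add: card_of_ordLess_infinite ordLess_imp_ordLeq)
next
  case (Suc n)
  let ?L = "{xs. length xs = n \<and> set xs \<subseteq> S}"
  have "{xs. length xs = Suc n \<and> set xs \<subseteq> S} \<subseteq> case_prod Cons ` (S \<times> ?L)"
    by (auto simp: length_Suc_conv)
  then have "|{xs. length xs = Suc n \<and> set xs \<subseteq> S}| \<le>o |S \<times> ?L|"
    by (rule ordLeq_transitive[OF card_of_mono1 card_of_image])
  also have "|S \<times> ?L| \<le>o |S \<times> S|" using Suc by (rule card_of_Times_mono2)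
  also have "|S \<times> S| \<le>o |S|" by (rule ordIso_imp_ordLeq[OF card_of_Times_same_infinite[OF S]])
  finally show ?case .
qed

lemma card_of_Fpow_le_infinite:
  assumes S: "infinite S"
  shows "|Fpow S| \<le>o |S|"
proof -
  have "Fpow S \<subseteq> set ` (\<Union>n. {xs. length xs = n \<and> set xs \<subseteq> S})"
    by (auto simp: Fpow_def image_iff) (metis finite_list)
  then have "|Fpow S| \<le>o |\<Union>n. {xs. length xs = n \<and> set xs \<subseteq> S}|"
    by (rule ordLeq_transitive[OF card_of_mono1 card_of_image])
  also have "|\<Union>n. {xs. length xs = n \<and> set xs \<subseteq> S}| \<le>o |S|"
    using card_of_lists_length_le[OF S]
    by (intro card_of_UNION_ordLeq_infinite[OF S infinite_iff_card_of_nat[THEN iffD1, OF S]]) blast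
  finally show ?thesis .
qed

lemma small_Fpow: "small S \<Longrightarrow> small (Fpow S)"
proof (cases "finite S")
  case True
  then show ?thesis by (simp add: Fpow_def small_finite)
next
  case False
  assume "small S"
  then show ?thesis
    unfolding small_def by (rule ordLeq_ordLess_trans[OF card_of_Fpow_le_infinite[OF False]])
qed

section \<open>Splitting large covers and omega-covers\<close>

lemma clopen_in_Collect_mem: "clopen_in X {x \<in> X. n \<in> x}"
proof -
  have "openin cantor_top {x. n \<in> x}" "openin cantor_top {x. n \<notin> x}"
    unfolding openin_cantor_top_iff by (auto intro!: exI[of _ "Suc n"] simp: cylinder_def)
  then have "closedin cantor_top {x. n \<in> x}"
    by (simp add: closedin_def Compl_eq_Diff_UNIV[symmetric] Collect_neg_eq[symmetric])
  with \<open>openin cantor_top {x. n \<in> x}\<close> show ?thesis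
    unfolding clopen_in_def openin_subtopology closedin_subtopology by blast
qed

lemma omega_cover_by_mem_sets:
  assumes "omega_cover X \<V>" "\<V> \<subseteq> range U" "\<And>n. U n \<subseteq> {x. n \<in> x}" "finite F" "F \<subseteq> X"
  shows "\<exists>n. U n \<in> \<V> \<and> n \<in> \<Inter>F"
proof -
  obtain V where "V \<in> \<V>" "F \<subseteq> V" using assms(1,4,5) unfolding omega_cover_def by blast
  moreover obtain n where "V = U n" using assms(2) \<open>V \<in> \<V>\<close> by blast
  ultimately show ?thesis using assms(3) by blast
qed

lemma range_mem_sets_C_Omega:
  assumes nonempty: "\<And>F. finite F \<Longrightarrow> F \<subseteq> X \<Longrightarrow> \<Inter>F \<noteq> {}"
    and avoid: "\<And>n. \<exists>x\<in>X. n \<notin> x"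
  shows "range (\<lambda>n. {x \<in> X. n \<in> x}) \<in> C_Omega X"
proof -
  let ?U = "\<lambda>n. {x \<in> X. n \<in> x}"
  have "X \<subseteq> \<Union>(range ?U)"
  proof
    fix x assume "x \<in> X"
    then obtain n where "n \<in> x" using nonempty[of "{x}"] by auto
    with \<open>x \<in> X\<close> show "x \<in> \<Union>(range ?U)" by blast
  qed
  then have "is_cover X (range ?U)"
    unfolding is_cover_def using avoid by blast
  moreover have "\<exists>V\<in>range ?U. F \<subseteq> V" if F: "finite F" "F \<subseteq> X" for F
  proof -
    obtain n where "n \<in> \<Inter>F" using nonempty[OF F] by blast
    with F(2) show ?thesis by blast
  qed
  ultimately show ?thesis
    unfolding C_Omega_def omega_cover_def using clopen_in_Collect_mem by blast
qed

theorem not_Split_C_Omega_C_Omega: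
  assumes nonempty: "\<And>F. finite F \<Longrightarrow> F \<subseteq> X \<Longrightarrow> \<Inter>F \<noteq> {}"
    and avoid: "\<And>n. \<exists>x\<in>X. n \<notin> x"
    and unsplit: "\<And>P. \<exists>F. finite F \<and> F \<subseteq> X \<and> (\<Inter>F \<inter> P = {} \<or> \<Inter>F \<inter> - P = {})"
  shows "\<not> Split C_Omega C_Omega X"
proof
  assume "Split C_Omega C_Omega X"
  define U where "U n = {x \<in> X. n \<in> x}" for n
  have "range U \<in> C_Omega X"
    using range_mem_sets_C_Omega[OF nonempty avoid] by (simp add: U_def)
  with \<open>Split C_Omega C_Omega X\<close> obtain \<A> \<B> where AB: "\<A> \<union> \<B> = range U" "\<A> \<inter> \<B> = {}"
    and \<A>: "\<exists>\<A>'\<subseteq>\<A>. \<A>' \<in> C_Omega X" and \<B>: "\<exists>\<B>'\<subseteq>\<B>. \<B>' \<in> C_Omega X"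
    unfolding Split_def by (elim ballE exE conjE) auto
  obtain \<A>' where \<A>': "\<A>' \<subseteq> \<A>" "omega_cover X \<A>'"
    using \<A> unfolding C_Omega_def by auto
  obtain \<B>' where \<B>': "\<B>' \<subseteq> \<B>" "omega_cover X \<B>'"
    using \<B> unfolding C_Omega_def by auto
  define P where "P = {n. U n \<in> \<A>}"
  obtain F where F: "finite F" "F \<subseteq> X" "\<Inter>F \<inter> P = {} \<or> \<Inter>F \<inter> - P = {}"
    using unsplit[of P] by blast
  have U: "U n \<subseteq> {x. n \<in> x}" for n by (auto simp: U_def)
  obtain a where a: "U a \<in> \<A>'" "a \<in> \<Inter>F"
    using omega_cover_by_mem_sets[OF \<A>'(2) _ U F(1,2)] \<A>'(1) AB(1) by blast
  obtain b where b: "U b \<in> \<B>'" "b \<in> \<Inter>F"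
    using omega_cover_by_mem_sets[OF \<B>'(2) _ U F(1,2)] \<B>'(1) AB(1) by blast
  have "a \<in> P" using a(1) \<A>'(1) by (simp add: P_def subset_iff)
  moreover have "b \<notin> P" using b(1) \<B>'(1) AB(2) by (auto simp: P_def)
  ultimately show False using F(3) a(2) b(2) by (metis ComplI IntI empty_iff)
qed

lemma B_Lambda_image:
  fixes u :: "nat \<Rightarrow> nat set set"
  assumes \<U>: "\<U> \<in> B_Lambda X" and u: "bij_betw u UNIV \<U>"
    and Q: "\<forall>x\<in>X. infinite ({n. x \<in> u n} \<inter> Q)"
  shows "u ` Q \<in> B_Lambda X"
proof -
  have cover: "is_cover X \<U>" and borel: "\<U> \<subseteq> borel_in X"
    using \<U> unfolding B_Lambda_def large_cover_def by auto
  have range_u: "range u = \<U>" and inj_u: "inj u"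
    using u by (auto simp: bij_betw_def)
  have "X \<subseteq> \<Union>(u ` Q)"
  proof
    fix x assume "x \<in> X"
    then have "{n. x \<in> u n} \<inter> Q \<noteq> {}" using Q by force
    then obtain n where "n \<in> Q" "x \<in> u n" by blast
    then show "x \<in> \<Union>(u ` Q)" by blast
  qed
  with cover range_u have "is_cover X (u ` Q)"
    unfolding is_cover_def by blast
  moreover have "infinite {U \<in> u ` Q. x \<in> U}" if "x \<in> X" for x
  proof -
    have "{U \<in> u ` Q. x \<in> U} = u ` ({n. x \<in> u n} \<inter> Q)" by blast
    then show ?thesis
      using Q that finite_imageD[OF _ inj_on_subset[OF inj_u]] by fastforce
  qed
  ultimately show ?thesis
    using borel range_u unfolding B_Lambda_def large_cover_def by auto
qed

theorem Split_B_Lambda_B_Lambda: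
  assumes "X \<noteq> {}"
    and splitter: "\<And>cs :: nat \<Rightarrow> borel_code. \<forall>x\<in>X. infinite {n. x \<in> borel_set (cs n)} \<Longrightarrow>
      \<exists>P. \<forall>x\<in>X. splits P {n. x \<in> borel_set (cs n)}"
  shows "Split B_Lambda B_Lambda X"
  unfolding Split_def
proof
  fix \<U> assume \<U>: "\<U> \<in> B_Lambda X"
  then have large: "\<forall>x\<in>X. infinite {U \<in> \<U>. x \<in> U}" and borel: "\<U> \<subseteq> borel_in X"
    and "countable \<U>"
    unfolding B_Lambda_def large_cover_def by auto
  have "infinite \<U>"
    using large \<open>X \<noteq> {}\<close> infinite_super[of "{U \<in> \<U>. x \<in> U}" \<U> for x] by blast
  define u where "u = from_nat_into \<U>"
  have u: "bij_betw u UNIV \<U>"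
    unfolding u_def using \<open>countable \<U>\<close> \<open>infinite \<U>\<close> by (rule bij_betw_from_nat_into)
  then have range_u: "range u = \<U>" and inj_u: "inj u" by (auto simp: bij_betw_def)
  have "\<forall>n. \<exists>c. u n = borel_set c \<inter> X"
    using borel range_u borel_in_eq_borel_set_Int by blast
  from choice[OF this] obtain cs where cs: "\<forall>n. u n = borel_set (cs n) \<inter> X"
    by blast
  have A: "{n. x \<in> borel_set (cs n)} = {n. x \<in> u n}" if "x \<in> X" for x
    using cs that by auto
  have "infinite {n. x \<in> u n}" if "x \<in> X" for x
  proof
    assume "finite {n. x \<in> u n}"
    then have "finite (u ` {n. x \<in> u n})" by blast
    moreover have "u ` {n. x \<in> u n} = {U \<in> \<U>. x \<in> U}" using range_u by blast
    ultimately show False using large that by simp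
  qed
  then obtain P where P: "\<forall>x\<in>X. splits P {n. x \<in> u n}"
    using splitter[of cs] A by auto
  have "u ` P \<in> B_Lambda X" "u ` (- P) \<in> B_Lambda X"
    using P by (auto intro!: B_Lambda_image[OF \<U> u] simp: splits_def Diff_eq)
  moreover have "u ` P \<union> u ` (- P) = \<U>" "u ` P \<inter> u ` (- P) = {}"
    using range_u inj_u by (auto simp: inj_def)
  ultimately show "\<exists>\<A> \<B>. \<A> \<union> \<B> = \<U> \<and> \<A> \<inter> \<B> = {} \<and>
      (\<exists>\<A>'\<subseteq>\<A>. \<A>' \<in> B_Lambda X) \<and> (\<exists>\<B>'\<subseteq>\<B>. \<B>' \<in> B_Lambda X)"
    by blast
qed

section \<open>The construction\<close>

definition sfip :: "nat set set \<Rightarrow> bool" where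
  "sfip S \<longleftrightarrow> (\<forall>F. finite F \<and> F \<subseteq> S \<longrightarrow> infinite (\<Inter>F))"

lemma sfip_infinite_Diff:
  assumes "sfip S"
  shows "(\<forall>h\<in>Inter ` Fpow S. infinite (h - Q)) \<or> (\<forall>h\<in>Inter ` Fpow S. infinite (h - - Q))"
proof (rule ccontr)
  assume "\<not> ?thesis"
  then obtain F F' where F: "F \<in> Fpow S" "finite (\<Inter>F - Q)"
    and F': "F' \<in> Fpow S" "finite (\<Inter>F' - - Q)"
    by blast
  have "\<Inter>(F \<union> F') \<subseteq> (\<Inter>F - Q) \<union> (\<Inter>F' - - Q)" by blast
  then have "finite (\<Inter>(F \<union> F'))" using F(2) F'(2) by (meson finite_UnI finite_subset)
  moreover have "finite (F \<union> F')" "F \<union> F' \<subseteq> S" using F(1) F'(1) by (auto simp: Fpow_def)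
  ultimately show False using assms unfolding sfip_def by blast
qed

definition stage_codes :: "nat set \<Rightarrow> nat \<Rightarrow> borel_code" where
  "stage_codes = inv code_seq_tree"

lemma surj_stage_codes: "surj stage_codes"
  unfolding stage_codes_def by (rule inj_imp_surj_inv[OF inj_code_seq_tree])

definition stage_open :: "nat set \<Rightarrow> nat \<Rightarrow> nat set set" where
  "stage_open \<alpha> n = fst (baire_decomp (stage_codes \<alpha> n))"

definition stage_meager :: "nat set \<Rightarrow> nat set set" where
  "stage_meager \<alpha> = (\<Union>n. snd (baire_decomp (stage_codes \<alpha> n)))"

definition stage_sets :: "nat set \<Rightarrow> nat set \<Rightarrow> nat set" where
  "stage_sets \<alpha> x = {n. x \<in> borel_set (stage_codes \<alpha> n)}"

lemma openin_stage_open: "openin cantor_top (stage_open \<alpha> n)"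
  by (simp add: stage_open_def baire_decomp)

lemma meager_stage_meager: "meager (stage_meager \<alpha>)"
  unfolding stage_meager_def by (intro meager_UN baire_decomp) auto

lemma stage_sets_eq_stage_open:
  "x \<notin> stage_meager \<alpha> \<Longrightarrow> stage_sets \<alpha> x = {n. x \<in> stage_open \<alpha> n}"
  using baire_decomp(3) unfolding stage_sets_def stage_open_def stage_meager_def by blast

text \<open>At stage \<open>\<alpha>\<close> the points \<open>X\<close> are added and the splitter \<open>P\<close> is chosen.  The condition
  on \<open>\<Inter>X\<close> prevents \<open>\<alpha>\<close>, read as a partition of the cover by the sets \<open>{x. n \<in> x}\<close>,
  from splitting it; \<open>P\<close> takes care of the \<open>\<alpha>\<close>-th sequence of Borel codes.\<close>
definition stage_ok :: "nat set set \<Rightarrow> nat set set \<Rightarrow> nat set \<Rightarrow> nat set set \<Rightarrow> nat set \<Rightarrow> bool" where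
  "stage_ok S W \<alpha> X P \<longleftrightarrow> finite X \<and> X \<inter> W = {} \<and> sfip (S \<union> X) \<and> (\<exists>x\<in>X. card \<alpha> \<notin> x) \<and>
     (\<Inter>X \<inter> \<alpha> = {} \<or> \<Inter>X \<inter> - \<alpha> = {}) \<and> good_splitter (stage_open \<alpha>) P \<and>
     (\<forall>x\<in>S \<union> X. infinite (stage_sets \<alpha> x) \<longrightarrow> splits P (stage_sets \<alpha> x))"

locale add_meager_continuum =
  assumes add_meager: "is_addM (UNIV :: nat set set)"
begin

lemma meager_Union_small:
  assumes "small F" "\<And>M. M \<in> F \<Longrightarrow> meager M"
  shows "meager (\<Union>F)"
proof (rule ccontr)
  assume "\<not> meager (\<Union>F)"
  then have "F \<in> nonmeager_unions" using assms(2) by (auto simp: nonmeager_unions_def)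
  then have "|UNIV :: nat set set| \<le>o |F|" using add_meager by (auto simp: is_addM_def)
  then show False using assms(1) not_ordLess_ordLeq unfolding small_def by blast
qed

lemma meager_UN_small:
  "small I \<Longrightarrow> (\<And>i. i \<in> I \<Longrightarrow> meager (A i)) \<Longrightarrow> meager (\<Union>i\<in>I. A i)"
  by (rule meager_Union_small) (auto intro: small_image)

lemma splitter_exists:
  assumes "small Y"
  shows "\<exists>P. good_splitter G P \<and> (\<forall>y\<in>Y. infinite (A y) \<longrightarrow> splits P (A y))"
proof -
  let ?B = "{P. \<not> good_splitter G P} \<union> (\<Union>y\<in>{y \<in> Y. infinite (A y)}. {P. \<not> splits P (A y)})"
  have "meager ?B"
    using assms meager_not_splits
    by (intro meager_Un meager_not_good_splitter meager_UN_small) (auto intro: small_subset)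
  then have "?B \<noteq> UNIV" using not_meager_UNIV by metis
  then obtain P where "P \<notin> ?B" by blast
  then show ?thesis by blast
qed

text \<open>A generic point cannot be disjoint from an infinite \<open>Q\<close>, as that set is nowhere dense.
  Instead two generic points are decoded from the bit pairs of one generic \<open>z\<close> so that
  their intersection avoids \<open>Q\<close>.\<close>
lemma twin_points_exist:
  assumes "small H" "\<forall>h\<in>H. infinite (h - Q)" "meager W"
  shows "\<exists>x y. x \<notin> W \<and> y \<notin> W \<and> k \<notin> x \<and> x \<inter> y \<inter> Q = {} \<and> (\<forall>h\<in>H. infinite (x \<inter> y \<inter> h))"
proof -
  let ?x = "pair_bits (\<lambda>n a b. a \<and> (n \<in> Q \<longrightarrow> \<not> b))"
  let ?y = "pair_bits (\<lambda>n a b. b)"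
  let ?xy = "pair_bits (\<lambda>n a b. a \<and> b)"
  have xy: "?x z \<inter> ?y z \<inter> h = ?xy z \<inter> (h - Q)" for z h
    by (auto simp: pair_bits_def)
  let ?B = "?x -` W \<union> ?y -` W \<union> (\<Union>h\<in>H. ?xy -` {w. finite (w \<inter> (h - Q))})"
  have "meager ?B"
  proof (intro meager_Un meager_UN_small)
    show "meager (?x -` W)"
      by (rule meager_vimage_pair_bits[OF _ assms(3)]) blast
    show "meager (?y -` W)"
      by (rule meager_vimage_pair_bits[OF _ assms(3)]) blast
    show "meager (?xy -` {w. finite (w \<inter> (h - Q))})" if "h \<in> H" for h
      using that assms(2) by (intro meager_vimage_pair_bits meager_finite_Int) auto
  qed (rule assms(1))
  then obtain z where z: "z \<in> cylinder {} (Suc (2 * k))" "z \<notin> ?B"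
    using baire_cylinder by metis
  have "?x z \<notin> W" "?y z \<notin> W" using z(2) by auto
  moreover have "infinite (?x z \<inter> ?y z \<inter> h)" if "h \<in> H" for h
    using z(2) that by (simp add: xy)
  moreover have "k \<notin> ?x z" using z(1) by (simp add: pair_bits_def cylinder_def)
  moreover have "?x z \<inter> ?y z \<inter> Q = {}" by (auto simp: pair_bits_def)
  ultimately show ?thesis by blast
qed

lemma new_points_exist:
  assumes "small S" "sfip S" "meager W"
  shows "\<exists>X. finite X \<and> X \<inter> W = {} \<and> sfip (S \<union> X) \<and> (\<exists>x\<in>X. k \<notin> x) \<and>
    (\<Inter>X \<inter> Q = {} \<or> \<Inter>X \<inter> - Q = {})"
proof -
  define H where "H = Inter ` Fpow S"
  have "small H" using assms(1) by (simp add: H_def small_image small_Fpow)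
  obtain R where R: "R = Q \<or> R = - Q" "\<forall>h\<in>H. infinite (h - R)"
    using sfip_infinite_Diff[OF assms(2), of Q] unfolding H_def by blast
  obtain x y where xy: "x \<notin> W" "y \<notin> W" "k \<notin> x" "x \<inter> y \<inter> R = {}" "\<forall>h\<in>H. infinite (x \<inter> y \<inter> h)"
    using twin_points_exist[OF \<open>small H\<close> R(2) assms(3)] by blast
  have "sfip (S \<union> {x, y})"
    unfolding sfip_def
  proof (intro allI impI)
    fix F assume "finite F \<and> F \<subseteq> S \<union> {x, y}"
    then have "\<Inter>(F - {x, y}) \<in> H" by (auto simp: H_def Fpow_def)
    then have "infinite (x \<inter> y \<inter> \<Inter>(F - {x, y}))" using xy(5) by blast
    moreover have "x \<inter> y \<inter> \<Inter>(F - {x, y}) \<subseteq> \<Inter>F" by blast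
    ultimately show "infinite (\<Inter>F)" using finite_subset by blast
  qed
  moreover have "\<Inter>{x, y} \<inter> Q = {} \<or> \<Inter>{x, y} \<inter> - Q = {}" using xy(4) R(1) by auto
  ultimately show ?thesis using xy(1-3) by (intro exI[of _ "{x, y}"]) auto
qed

lemma stage_ok_exists:
  assumes "small S" "sfip S" "meager W"
  shows "\<exists>X P. stage_ok S W \<alpha> X P"
proof -
  obtain X where X: "finite X" "X \<inter> W = {}" "sfip (S \<union> X)" "\<exists>x\<in>X. card \<alpha> \<notin> x"
    "\<Inter>X \<inter> \<alpha> = {} \<or> \<Inter>X \<inter> - \<alpha> = {}"
    using new_points_exist[OF assms, where k = "card \<alpha>" and Q = \<alpha>] by blast
  moreover obtain P where "good_splitter (stage_open \<alpha>) P"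
    "\<forall>x\<in>S \<union> X. infinite (stage_sets \<alpha> x) \<longrightarrow> splits P (stage_sets \<alpha> x)"
    using splitter_exists[OF small_Un[OF assms(1) small_finite[OF X(1)]],
        where G = "stage_open \<alpha>" and A = "stage_sets \<alpha>"]
    by blast
  ultimately show ?thesis unfolding stage_ok_def by blast
qed

end

abbreviation stage_order :: "nat set rel" where
  "stage_order \<equiv> |UNIV :: nat set set|"

lemma wo_rel_stage_order: "wo_rel stage_order"
  by (simp add: wo_rel_def card_of_Well_order)

lemma small_underS_stage_order: "small (underS stage_order \<alpha>)"
  unfolding small_def using card_of_underS[OF card_of_Card_order, of \<alpha> "UNIV :: nat set set"]
  by (simp add: Field_card_of)

lemma stage_order_total: "(\<alpha>, \<beta>) \<in> stage_order \<or> \<beta> \<in> underS stage_order \<alpha>"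
  using wo_rel.TOTALS[OF wo_rel_stage_order] by (auto simp: underS_def Field_card_of)

lemma finite_stage_order_greatest:
  "finite X \<Longrightarrow> X \<noteq> {} \<Longrightarrow> \<exists>\<beta>\<in>X. \<forall>\<gamma>\<in>X. (\<gamma>, \<beta>) \<in> stage_order"
proof (induction X rule: finite_ne_induct)
  case (singleton x)
  then show ?case using wo_rel.REFL[OF wo_rel_stage_order] by (simp add: refl_on_def Field_card_of)
next
  case (insert x X)
  then obtain \<beta> where \<beta>: "\<beta> \<in> X" "\<forall>\<gamma>\<in>X. (\<gamma>, \<beta>) \<in> stage_order" by blast
  obtain m where m: "(x, m) \<in> stage_order" "(\<beta>, m) \<in> stage_order" "m = x \<or> m = \<beta>"
    using wo_rel.max2_greater_among[OF wo_rel_stage_order, of x \<beta>] by (auto simp: Field_card_of)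
  have "(\<gamma>, m) \<in> stage_order" if "\<gamma> \<in> X" for \<gamma>
    using \<beta>(2) that m(2) wo_rel.TRANS[OF wo_rel_stage_order] unfolding trans_def by blast
  then have "\<forall>\<gamma>\<in>insert x X. (\<gamma>, m) \<in> stage_order" using m(1) by blast
  moreover have "m \<in> insert x X" using m(3) \<beta>(1) by blast
  ultimately show ?case by blast
qed

definition points_before :: "(nat set \<Rightarrow> nat set set \<times> nat set) \<Rightarrow> nat set \<Rightarrow> nat set set" where
  "points_before g \<alpha> = (\<Union>\<gamma>\<in>underS stage_order \<alpha>. fst (g \<gamma>))"

definition forbidden :: "(nat set \<Rightarrow> nat set set \<times> nat set) \<Rightarrow> nat set \<Rightarrow> nat set set" where
  "forbidden g \<gamma> = stage_meager \<gamma> \<union> fst (g \<gamma>) \<union>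
     {x \<in> infinitely_often (stage_open \<gamma>). \<not> splits (snd (g \<gamma>)) {n. x \<in> stage_open \<gamma> n}}"

definition forbidden_before :: "(nat set \<Rightarrow> nat set set \<times> nat set) \<Rightarrow> nat set \<Rightarrow> nat set set" where
  "forbidden_before g \<alpha> = (\<Union>\<gamma>\<in>underS stage_order \<alpha>. forbidden g \<gamma>)"

definition next_stage :: "(nat set \<Rightarrow> nat set set \<times> nat set) \<Rightarrow> nat set \<Rightarrow> nat set set \<times> nat set" where
  "next_stage g \<alpha> = (SOME p. stage_ok (points_before g \<alpha>) (forbidden_before g \<alpha>) \<alpha> (fst p) (snd p))"

definition stage :: "nat set \<Rightarrow> nat set set \<times> nat set" where
  "stage = wo_rel.worec stage_order next_stage"

abbreviation stage_points :: "nat set \<Rightarrow> nat set set" where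
  "stage_points \<alpha> \<equiv> fst (stage \<alpha>)"

abbreviation stage_splitter :: "nat set \<Rightarrow> nat set" where
  "stage_splitter \<alpha> \<equiv> snd (stage \<alpha>)"

lemma stage_eq_next_stage: "stage \<alpha> = next_stage stage \<alpha>"
proof -
  have "wo_rel.adm_wo stage_order next_stage"
    unfolding wo_rel.adm_wo_def[OF wo_rel_stage_order]
  proof (intro allI impI)
    fix f g :: "nat set \<Rightarrow> nat set set \<times> nat set" and \<alpha>
    assume eq: "\<forall>\<gamma>\<in>underS stage_order \<alpha>. f \<gamma> = g \<gamma>"
    then have "points_before f \<alpha> = points_before g \<alpha>" "forbidden_before f \<alpha> = forbidden_before g \<alpha>"
      unfolding points_before_def forbidden_before_def forbidden_def by simp_all
    then show "next_stage f \<alpha> = next_stage g \<alpha>" unfolding next_stage_def by simp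
  qed
  then have "stage = next_stage stage"
    unfolding stage_def by (rule wo_rel.worec_fixpoint[OF wo_rel_stage_order])
  then show ?thesis by (rule fun_cong)
qed

lemma sfip_UN_stage_points:
  assumes ok: "\<And>\<beta>. \<beta> \<in> A \<Longrightarrow> stage_ok (points_before stage \<beta>) (forbidden_before stage \<beta>) \<beta>
    (stage_points \<beta>) (stage_splitter \<beta>)"
  shows "sfip (\<Union>\<beta>\<in>A. stage_points \<beta>)"
  unfolding sfip_def
proof (intro allI impI)
  fix F assume F: "finite F \<and> F \<subseteq> (\<Union>\<beta>\<in>A. stage_points \<beta>)"
  show "infinite (\<Inter>F)"
  proof (cases "F = {}")
    case False
    have "\<forall>x\<in>F. \<exists>\<beta>. \<beta> \<in> A \<and> x \<in> stage_points \<beta>" using F by blast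
    then obtain st where st: "\<And>x. x \<in> F \<Longrightarrow> st x \<in> A \<and> x \<in> stage_points (st x)"
      by (metis bchoice)
    obtain \<beta> where \<beta>: "\<beta> \<in> st ` F" "\<forall>\<gamma>\<in>st ` F. (\<gamma>, \<beta>) \<in> stage_order"
      using finite_stage_order_greatest[of "st ` F"] F False by blast
    have "F \<subseteq> points_before stage \<beta> \<union> stage_points \<beta>"
    proof
      fix x assume "x \<in> F"
      then have "st x = \<beta> \<or> st x \<in> underS stage_order \<beta>"
        using \<beta>(2) by (auto simp: underS_def)
      then show "x \<in> points_before stage \<beta> \<union> stage_points \<beta>"
        using st[OF \<open>x \<in> F\<close>] unfolding points_before_def by auto
    qed
    moreover have "\<beta> \<in> A" using \<beta>(1) st by blast
    then have "sfip (points_before stage \<beta> \<union> stage_points \<beta>)"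
      using ok by (simp add: stage_ok_def)
    ultimately show ?thesis using F unfolding sfip_def by blast
  qed simp
qed

context add_meager_continuum
begin

theorem stage_ok_stage:
  "stage_ok (points_before stage \<alpha>) (forbidden_before stage \<alpha>) \<alpha>
    (stage_points \<alpha>) (stage_splitter \<alpha>)"
proof (induction \<alpha> rule: wo_rel.well_order_induct[OF wo_rel_stage_order])
  case (1 \<alpha>)
  then have IH: "\<And>\<gamma>. \<gamma> \<in> underS stage_order \<alpha> \<Longrightarrow> stage_ok (points_before stage \<gamma>)
    (forbidden_before stage \<gamma>) \<gamma> (stage_points \<gamma>) (stage_splitter \<gamma>)"
    by (simp add: underS_def)
  have "small (points_before stage \<alpha>)"
    unfolding points_before_def
    using IH by (intro small_UN_finite small_underS_stage_order) (simp add: stage_ok_def)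
  moreover have "sfip (points_before stage \<alpha>)"
    unfolding points_before_def using IH by (rule sfip_UN_stage_points)
  moreover have "meager (forbidden_before stage \<alpha>)"
    unfolding forbidden_before_def
  proof (intro meager_UN_small small_underS_stage_order)
    fix \<gamma> assume "\<gamma> \<in> underS stage_order \<alpha>"
    then have "finite (stage_points \<gamma>)" "good_splitter (stage_open \<gamma>) (stage_splitter \<gamma>)"
      using IH by (simp_all add: stage_ok_def)
    then show "meager (forbidden stage \<gamma>)"
      unfolding forbidden_def
      by (intro meager_Un meager_stage_meager meager_countable countable_finite
          meager_not_splits_good_splitter openin_stage_open)
  qed
  ultimately have
    "\<exists>p. stage_ok (points_before stage \<alpha>) (forbidden_before stage \<alpha>) \<alpha> (fst p) (snd p)"
    using stage_ok_exists by simp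
  then show ?case
    unfolding stage_eq_next_stage[of \<alpha>] next_stage_def by (rule someI_ex)
qed

end

section \<open>The Luzin set\<close>

definition luzin_set :: "nat set set" where
  "luzin_set = (\<Union>\<alpha>. stage_points \<alpha>)"

lemma is_addM_ordLeq: "is_addM K \<Longrightarrow> is_addM K' \<Longrightarrow> |K| \<le>o |K'|"
  unfolding is_addM_def using ordLeq_ordIso_trans by blast

context add_meager_continuum
begin

lemma sfip_luzin_set: "sfip luzin_set"
  unfolding luzin_set_def using stage_ok_stage by (rule sfip_UN_stage_points)

lemma luzin_set_subset_infinite_subsets: "luzin_set \<subseteq> infinite_subsets"
proof
  fix x assume "x \<in> luzin_set"
  then have "infinite (\<Inter>{x})" using sfip_luzin_set unfolding sfip_def by blast
  then show "x \<in> infinite_subsets" by (simp add: infinite_subsets_def)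
qed

lemma stage_points_not_forbidden:
  assumes "\<gamma> \<in> underS stage_order \<alpha>" "x \<in> stage_points \<alpha>"
  shows "x \<notin> forbidden stage \<gamma>"
  using assms stage_ok_stage[of \<alpha>] unfolding stage_ok_def forbidden_before_def by blast

lemma stage_points_nonempty: "stage_points \<alpha> \<noteq> {}"
  using stage_ok_stage[of \<alpha>] unfolding stage_ok_def by blast

lemma card_of_luzin_set: "|UNIV :: nat set set| \<le>o |luzin_set|"
proof -
  define p where "p \<alpha> = (SOME x. x \<in> stage_points \<alpha>)" for \<alpha>
  have p: "p \<alpha> \<in> stage_points \<alpha>" for \<alpha>
    unfolding p_def using stage_points_nonempty by (simp add: some_in_eq)
  have p_forbidden: "p \<gamma> \<in> forbidden stage \<gamma>" for \<gamma>
    using p by (simp add: forbidden_def)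
  have "p \<alpha> \<noteq> p \<beta>" if "\<beta> \<in> underS stage_order \<alpha>" for \<alpha> \<beta>
    using stage_points_not_forbidden[OF that p] p_forbidden by metis
  then have "inj p"
    using stage_order_total by (metis injI underS_I)
  moreover have "range p \<subseteq> luzin_set" unfolding luzin_set_def using p by blast
  ultimately show ?thesis using card_of_ordLeq[of UNIV luzin_set] by blast
qed

lemma small_luzin_set_Int_meager:
  assumes "meager M"
  shows "small (luzin_set \<inter> M)"
proof -
  obtain c where c: "meager (borel_set c)" "M \<subseteq> borel_set c"
    using meager_subset_meager_borel_set[OF assms] by blast
  obtain \<beta> where "stage_codes \<beta> = (\<lambda>_. c)" using surj_stage_codes by (metis surjD)
  then have "M \<subseteq> stage_meager \<beta>"
    using c meager_borel_set_subset_baire_decomp[of c] by (auto simp: stage_meager_def)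
  have "luzin_set \<inter> M \<subseteq> (\<Union>\<gamma>\<in>insert \<beta> (underS stage_order \<beta>). stage_points \<gamma>)"
  proof
    fix x assume x: "x \<in> luzin_set \<inter> M"
    then obtain \<alpha> where \<alpha>: "x \<in> stage_points \<alpha>" by (auto simp: luzin_set_def)
    have "\<beta> \<notin> underS stage_order \<alpha>"
    proof
      assume "\<beta> \<in> underS stage_order \<alpha>"
      then have "x \<notin> stage_meager \<beta>"
        using stage_points_not_forbidden[OF _ \<alpha>] by (simp add: forbidden_def)
      with x \<open>M \<subseteq> stage_meager \<beta>\<close> show False by blast
    qed
    then have "\<alpha> \<in> insert \<beta> (underS stage_order \<beta>)"
      using stage_order_total[of \<alpha> \<beta>] by (auto simp: underS_def)
    with \<alpha> show "x \<in> (\<Union>\<gamma>\<in>insert \<beta> (underS stage_order \<beta>). stage_points \<gamma>)" by blast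
  qed
  moreover have "small (insert \<beta> (underS stage_order \<beta>))"
    using small_Un[OF small_finite[of "{\<beta>}"] small_underS_stage_order] by simp
  then have "small (\<Union>\<gamma>\<in>insert \<beta> (underS stage_order \<beta>). stage_points \<gamma>)"
    by (rule small_UN_finite) (use stage_ok_stage in \<open>simp add: stage_ok_def\<close>)
  ultimately show ?thesis by (rule small_subset[rotated])
qed

lemma luzin_luzin_set:
  assumes K: "is_addM K"
  shows "luzin K luzin_set"
  unfolding luzin_def
proof (intro conjI allI impI)
  show "|K| \<le>o |luzin_set|"
    using is_addM_ordLeq[OF K add_meager] card_of_luzin_set by (rule ordLeq_transitive)
  fix M assume "meager M"
  then have "|luzin_set \<inter> M| <o |UNIV :: nat set set|"
    using small_luzin_set_Int_meager by (simp add: small_def)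
  then show "|luzin_set \<inter> M| <o |K|"
    using is_addM_ordLeq[OF add_meager K] by (rule ordLess_ordLeq_trans)
qed

text \<open>A point chosen at a stage \<open>\<alpha>\<close> after \<open>\<beta>\<close> avoids \<open>stage_meager \<beta>\<close>, so for it the
  Borel sets coded at \<open>\<beta>\<close> may be replaced by their open parts, for which the splitter of
  stage \<open>\<beta>\<close> is good.\<close>
lemma splits_stage_sets:
  assumes x: "x \<in> luzin_set" and inf: "infinite (stage_sets \<beta> x)"
  shows "splits (stage_splitter \<beta>) (stage_sets \<beta> x)"
proof -
  obtain \<alpha> where \<alpha>: "x \<in> stage_points \<alpha>" using x by (auto simp: luzin_set_def)
  show ?thesis
  proof (cases "\<beta> \<in> underS stage_order \<alpha>")
    case True
    then have "x \<notin> forbidden stage \<beta>" using stage_points_not_forbidden \<alpha> by blast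
    then have "x \<notin> stage_meager \<beta>"
      and "x \<notin> infinitely_often (stage_open \<beta>) \<or> splits (stage_splitter \<beta>) {n. x \<in> stage_open \<beta> n}"
      by (auto simp: forbidden_def)
    then show ?thesis
      using inf by (simp add: stage_sets_eq_stage_open infinitely_often_def)
  next
    case False
    then have "x \<in> points_before stage \<beta> \<union> stage_points \<beta>"
      using \<alpha> stage_order_total[of \<alpha> \<beta>] by (auto simp: points_before_def underS_def)
    then show ?thesis
      using stage_ok_stage[of \<beta>] inf unfolding stage_ok_def by blast
  qed
qed

lemma Split_B_Lambda_luzin_set: "Split B_Lambda B_Lambda luzin_set"
proof (rule Split_B_Lambda_B_Lambda)
  show "luzin_set \<noteq> {}" using stage_points_nonempty by (auto simp: luzin_set_def)
next
  fix cs :: "nat \<Rightarrow> borel_code"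
  assume inf: "\<forall>x\<in>luzin_set. infinite {n. x \<in> borel_set (cs n)}"
  obtain \<beta> where "stage_codes \<beta> = cs" using surj_stage_codes by (metis surjD)
  then show "\<exists>P. \<forall>x\<in>luzin_set. splits P {n. x \<in> borel_set (cs n)}"
    using splits_stage_sets inf unfolding stage_sets_def by metis
qed

text \<open>Since \<open>card {..<n} = n\<close>, stage \<open>{..<n}\<close> provides a point of the set missing \<open>n\<close>.\<close>
lemma not_Split_C_Omega_luzin_set: "\<not> Split C_Omega C_Omega luzin_set"
proof (rule not_Split_C_Omega_C_Omega)
  show "\<Inter>F \<noteq> {}" if "finite F" "F \<subseteq> luzin_set" for F
    using sfip_luzin_set that unfolding sfip_def by force
  show "\<exists>x\<in>luzin_set. n \<notin> x" for n
    using stage_ok_stage[of "{..<n}"] unfolding stage_ok_def luzin_set_def by auto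
  show "\<exists>F. finite F \<and> F \<subseteq> luzin_set \<and> (\<Inter>F \<inter> P = {} \<or> \<Inter>F \<inter> - P = {})" for P
    using stage_ok_stage[of P] unfolding stage_ok_def luzin_set_def by blast
qed

end

theorem theorem5p7:
  assumes "is_addM (UNIV :: nat set set)"
  shows "\<exists>L \<subseteq> infinite_subsets. (\<forall>K :: nat set set set. is_addM K \<longrightarrow> luzin K L)
           \<and> Split B_Lambda B_Lambda L \<and> \<not> Split C_Omega C_Omega L"
proof -
  interpret add_meager_continuum by (rule add_meager_continuum.intro[OF assms])
  show ?thesis
    using luzin_set_subset_infinite_subsets luzin_luzin_set Split_B_Lambda_luzin_set
      not_Split_C_Omega_luzin_set by blast
qed

end
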